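(* Let $a_1,\dots,a_{k-1}, b, \tilde b \in \mathbb{R}^n$ with $b,\tilde b\neq 0$, and let $U=\mathrm{span}\{a_1,\dots,a_{k-1}\}$, $V=\mathrm{span}\{a_1,\dots,a_{k-1},b\}$, $\tilde V=\mathrm{span}\{a_1,\dots,a_{k-1},\tilde b\}$. Then $$\theta(V,\tilde V)\;\le\;\frac{\pi}{2}\,\frac{\theta(\tilde b, b)}{\theta(\tilde b, U)},$$ where the right-hand side is interpreted as $+\infty$ if $\theta(\tilde b,U)=0$.
   Context: For nonzero vectors $a,b$, $\theta(a,b)$ is the angle between them. For a nonzero vector $a$ and a subspace $V$, $\theta(a,V)=\min_{0\ne b\in V}\theta(a,b)$ (taken to be $\pi/2$ if $V=\{0\}$). For subspaces $U,V$, $\theta(U,V)=\max_{0\ne u\in U}\theta(u,V)$; thus $\theta(U,V)\le\alpha$ iff every nonzero $u\in U$ has some $v\in V$ with $\theta(u,v)\le\alpha$. *)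

theory Defs
  imports "HOL-Analysis.Analysis"
begin

definition vang :: "'a::real_inner \<Rightarrow> 'a \<Rightarrow> real" where
  "vang a b = arccos ((a \<bullet> b) / (norm a * norm b))"

text \<open>Angle between a nonzero vector and a subspace: minimum over nonzero elements
  (the minimum is attained in finite dimension, so it equals the infimum);
  pi/2 if the subspace is trivial.\<close>
definition vsang :: "'a::real_inner \<Rightarrow> 'a set \<Rightarrow> real" where
  "vsang a V = (if V \<subseteq> {0} then pi / 2 else Inf {vang a b | b. b \<in> V \<and> b \<noteq> 0})"

definition ssang :: "'a::real_inner set \<Rightarrow> 'a set \<Rightarrow> real" where
  "ssang U V = (if U \<subseteq> {0} then 0 else Sup {vsang u V | u. u \<in> U \<and> u \<noteq> 0})"

end

theory Submission
  imports Defs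
begin

text \<open>Write \<open>b = x + p\<close> and \<open>bt = y + q\<close> with \<open>x, y \<in> U\<close> and \<open>p, q \<bottom> U\<close>, and let
  \<open>\<alpha> = \<theta>(bt, b)\<close>, \<open>\<beta> = \<theta>(bt, U)\<close>. A nonzero \<open>v = u + t b\<close> in \<open>V\<close> is approximated in \<open>Vt\<close>
  by replacing its component \<open>t p\<close> with the projection of \<open>t p\<close> onto the line through \<open>q\<close>;
  the relative error is the sine of the angle between \<open>p\<close> and \<open>q\<close>. That sine is at most
  \<open>sin \<alpha> / sin \<beta>\<close>, because \<open>|q| \<ge> |bt| sin \<beta>\<close> and, for every \<open>s\<close>, \<open>q - s p\<close> is the part of
  \<open>bt - s b\<close> orthogonal to \<open>U\<close>. Finally \<open>sin (x s) / sin s\<close> increases on \<open>]0, pi/2]\<close>, so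
  \<open>sin \<alpha> \<le> sin \<beta> sin \<gamma>\<close> with \<open>\<gamma> = pi/2 \<cdot> \<alpha> / \<beta>\<close>. If \<open>\<alpha> \<ge> \<beta>\<close> the bound is at least \<open>pi/2\<close>
  and holds trivially.\<close>

lemma sin_mult_cos_le:
  fixes x t :: real
  assumes "0 \<le> x" "x \<le> 1" "0 \<le> t" "t \<le> pi/2"
  shows "sin (x * t) * cos t \<le> x * cos (x * t) * sin t"
proof -
  define h where "h = (\<lambda>s::real. x * cos (x * s) * sin s - sin (x * s) * cos s)"
  have "h 0 \<le> h t"
  proof (rule DERIV_nonneg_imp_nondecreasing[OF assms(3)])
    fix s assume s: "0 \<le> s" "s \<le> t"
    have "DERIV h s :> (1 - x\<^sup>2) * sin (x * s) * sin s"
      unfolding h_def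
      by (rule derivative_eq_intros refl | simp)+ (simp add: algebra_simps power2_eq_square)
    moreover have "0 \<le> sin (x * s)" using s assms
      by (intro sin_ge_zero) (auto intro: order_trans[OF mult_left_le_one_le])
    moreover have "0 \<le> sin s" using s assms by (intro sin_ge_zero) auto
    moreover have "0 \<le> 1 - x\<^sup>2" using assms by (simp add: abs_square_le_1)
    ultimately show "\<exists>y. DERIV h s :> y \<and> y \<ge> 0" by auto
  qed
  then show ?thesis by (simp add: h_def)
qed

text \<open>The quotient \<open>sin (x s) / sin s\<close> increases on \<open>]0, pi/2]\<close>, its derivative having
  the sign of the left-hand side of the previous lemma.\<close>
lemma sin_mult_le_sin_mult_sin:
  fixes x b :: real
  assumes "0 \<le> x" "x \<le> 1" "0 < b" "b \<le> pi/2"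
  shows "sin (x * b) \<le> sin b * sin (x * pi/2)"
proof -
  define g where "g = (\<lambda>s::real. sin (x * s) / sin s)"
  have "g b \<le> g (pi/2)"
  proof (rule DERIV_nonneg_imp_nondecreasing[OF assms(4)])
    fix s assume s: "b \<le> s" "s \<le> pi/2"
    have "sin s > 0" using s assms by (intro sin_gt_zero) auto
    have "DERIV g s :> (x * cos (x * s) * sin s - sin (x * s) * cos s) / (sin s)\<^sup>2"
      unfolding g_def
      by (rule derivative_eq_intros refl | simp)+
        (use \<open>sin s > 0\<close> in \<open>auto simp: algebra_simps power2_eq_square\<close>)
    moreover have "0 \<le> x * cos (x * s) * sin s - sin (x * s) * cos s"
      using sin_mult_cos_le[of x s] s assms by auto
    ultimately show "\<exists>y. DERIV g s :> y \<and> y \<ge> 0" by (intro exI) auto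
  qed
  moreover have "sin b > 0" using assms by (intro sin_gt_zero) auto
  ultimately show ?thesis by (simp add: g_def field_simps)
qed

lemma inner_div_norms_bounded:
  fixes x y :: "'a::real_inner"
  shows "-1 \<le> (x \<bullet> y) / (norm x * norm y) \<and> (x \<bullet> y) / (norm x * norm y) \<le> 1"
proof (cases "norm x * norm y = 0")
  case True then show ?thesis by auto
next
  case False
  then have pos: "norm x * norm y > 0" by (simp add: less_le)
  have "\<bar>x \<bullet> y\<bar> \<le> norm x * norm y" by (rule Cauchy_Schwarz_ineq2)
  then show ?thesis using pos by (auto simp: divide_le_eq le_divide_eq abs_le_iff)
qed

lemma vang_bounds: "0 \<le> vang x y \<and> vang x y \<le> pi"
  unfolding vang_def using inner_div_norms_bounded[of x y] arccos_bounded by blast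

lemma cos_vang: "cos (vang x y) = (x \<bullet> y) / (norm x * norm y)"
  unfolding vang_def using inner_div_norms_bounded[of x y] by simp

lemma inner_eq_cos_vang:
  fixes x y :: "'a::real_inner"
  assumes "x \<noteq> 0" "y \<noteq> 0"
  shows "x \<bullet> y = cos (vang x y) * norm x * norm y"
  using assms by (simp add: cos_vang)

lemma vang_le_if_inner_ge:
  fixes x y :: "'a::real_inner"
  assumes "0 \<le> g" "g \<le> pi" "x \<bullet> y \<ge> cos g * norm x * norm y" "x \<noteq> 0" "y \<noteq> 0"
  shows "vang x y \<le> g"
proof -
  have "norm x * norm y > 0" using assms by simp
  then have "cos g \<le> (x \<bullet> y) / (norm x * norm y)"
    using assms by (simp add: le_divide_eq mult.assoc)
  then have "arccos ((x \<bullet> y) / (norm x * norm y)) \<le> arccos (cos g)"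
    using inner_div_norms_bounded[of x y] by (intro arccos_le_arccos) auto
  then show ?thesis using assms by (simp add: vang_def arccos_cos)
qed

lemma vang_uminus_right: "vang x (- y) = pi - vang x y"
  unfolding vang_def using inner_div_norms_bounded[of x y] by (simp add: arccos_minus)

lemma vsang_le_vang:
  assumes "w \<in> W" "w \<noteq> 0"
  shows "vsang v W \<le> vang v w"
proof -
  have "Inf {vang v b | b. b \<in> W \<and> b \<noteq> 0} \<le> vang v w"
    by (rule cInf_lower) (use assms vang_bounds in \<open>auto intro!: bdd_belowI[of _ 0]\<close>)
  then show ?thesis using assms by (auto simp: vsang_def)
qed

lemma vsang_nonneg: "0 \<le> vsang v W"
  unfolding vsang_def by (auto intro!: cInf_greatest simp: vang_bounds)

lemma vsang_le_pi_half:
  assumes "subspace W"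
  shows "vsang v W \<le> pi/2"
proof (cases "W \<subseteq> {0}")
  case True then show ?thesis by (simp add: vsang_def)
next
  case False
  then obtain w where w: "w \<in> W" "w \<noteq> 0" by auto
  then have "- w \<in> W" "- w \<noteq> 0" using assms by (auto simp: subspace_neg)
  then have "vsang v W \<le> vang v w" "vsang v W \<le> vang v (- w)"
    using w by (auto intro: vsang_le_vang)
  then show ?thesis by (simp add: vang_uminus_right)
qed

lemma ssang_le:
  assumes "0 \<le> g" "\<And>u. u \<in> U \<Longrightarrow> u \<noteq> 0 \<Longrightarrow> vsang u V \<le> g"
  shows "ssang U V \<le> g"
  using assms unfolding ssang_def by (auto intro!: cSup_least)

lemma vang_le_if_norm_diff_le:
  fixes v w :: "'a::real_inner"
  assumes "v \<noteq> 0" "0 \<le> g" "g < pi/2" "(norm (v - w))\<^sup>2 \<le> (norm v)\<^sup>2 * (sin g)\<^sup>2"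
  shows "w \<noteq> 0" "vang v w \<le> g"
proof -
  have cg: "cos g > 0" using assms by (intro cos_gt_zero_pi) auto
  have "(norm (v - w))\<^sup>2 = (norm v)\<^sup>2 - 2 * (v \<bullet> w) + (norm w)\<^sup>2"
    by (simp add: power2_norm_eq_inner inner_diff_left inner_diff_right inner_commute)
  then have vw: "2 * (v \<bullet> w) \<ge> (norm v * cos g)\<^sup>2 + (norm w)\<^sup>2"
    using assms(4) by (simp add: sin_squared_eq algebra_simps power_mult_distrib)
  show "w \<noteq> 0"
  proof
    assume "w = 0"
    then have "(norm v * cos g)\<^sup>2 \<le> 0" using vw by simp
    moreover have "(norm v * cos g)\<^sup>2 > 0" using assms(1) cg by simp
    ultimately show False by linarith
  qed
  moreover have "(norm v * cos g)\<^sup>2 + (norm w)\<^sup>2 \<ge> 2 * (cos g * norm v * norm w)"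
    using sum_squares_ge_zero[of "norm v * cos g - norm w" 0]
    by (simp add: power2_eq_square algebra_simps)
  ultimately show "vang v w \<le> g"
    using vw assms by (intro vang_le_if_inner_ge) auto
qed

lemma norm_diff_proj_sq:
  fixes p q :: "'a::real_inner"
  assumes "q \<noteq> 0"
  shows "(norm (p - ((p \<bullet> q) / (q \<bullet> q)) *\<^sub>R q))\<^sup>2 = p \<bullet> p - (p \<bullet> q)\<^sup>2 / (q \<bullet> q)"
  using assms unfolding power2_norm_eq_inner
  by (simp add: inner_diff_left inner_diff_right inner_commute field_simps power2_eq_square)

lemma norm_diff_proj_sq_sin:
  fixes a b :: "'a::real_inner"
  assumes "b \<noteq> 0"
  shows "(norm (a - ((a \<bullet> b) / (b \<bullet> b)) *\<^sub>R b))\<^sup>2 = (norm a)\<^sup>2 * (sin (vang a b))\<^sup>2"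
proof -
  have "(norm a)\<^sup>2 * (cos (vang a b))\<^sup>2 = (a \<bullet> b)\<^sup>2 / (b \<bullet> b)"
    using assms by (cases "a = 0") (simp_all add: cos_vang power_divide power_mult_distrib
      flip: power2_norm_eq_inner)
  then show ?thesis
    using norm_diff_proj_sq[OF assms, of a]
    by (simp add: sin_squared_eq right_diff_distrib power2_norm_eq_inner)
qed

lemma gram_le_norm_diff_sq:
  fixes p q :: "'a::real_inner"
  shows "(p \<bullet> p) * (q \<bullet> q) - (p \<bullet> q)\<^sup>2 \<le> (p \<bullet> p) * (norm (q - s *\<^sub>R p))\<^sup>2"
proof -
  have "(p \<bullet> p) * (norm (q - s *\<^sub>R p))\<^sup>2 - ((p \<bullet> p) * (q \<bullet> q) - (p \<bullet> q)\<^sup>2)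
        = (s * (p \<bullet> p) - p \<bullet> q)\<^sup>2"
    unfolding power2_norm_eq_inner
    by (simp add: inner_diff_left inner_diff_right inner_commute algebra_simps power2_eq_square)
  then show ?thesis by (smt (verit) zero_le_power2)
qed

lemma norm_orthogonal_component_ge:
  assumes "subspace S" "y \<in> S" "\<And>w. w \<in> S \<Longrightarrow> orthogonal q w" "bt = y + q"
  shows "(norm bt)\<^sup>2 * (sin (vsang bt S))\<^sup>2 \<le> (norm q)\<^sup>2"
proof -
  define \<beta> where "\<beta> = vsang bt S"
  have \<beta>: "0 \<le> \<beta>" "\<beta> \<le> pi/2"
    using vsang_nonneg vsang_le_pi_half[OF assms(1)] by (auto simp: \<beta>_def)
  have "q \<bullet> y = 0" using assms(2,3) by (simp add: orthogonal_def)
  then have bt_y: "bt \<bullet> y = norm y * norm y"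
    by (simp add: assms(4) inner_add_left dot_square_norm power2_eq_square)
  have bt_sq: "(norm bt)\<^sup>2 = (norm y)\<^sup>2 + (norm q)\<^sup>2"
    using \<open>q \<bullet> y = 0\<close> unfolding assms(4) dot_square_norm[symmetric]
    by (simp add: inner_add_left inner_add_right inner_commute)
  have "norm y \<le> cos \<beta> * norm bt"
  proof (cases "y = 0")
    case True then show ?thesis using \<beta> by (simp add: cos_ge_zero)
  next
    case False
    then have "bt \<noteq> 0" using bt_y by auto
    have "\<beta> \<le> vang bt y" unfolding \<beta>_def using vsang_le_vang[OF assms(2) False] .
    then have "cos (vang bt y) \<le> cos \<beta>"
      using vang_bounds[of bt y] \<beta> by (subst cos_mono_le_eq) auto
    have "norm y * norm y = cos (vang bt y) * norm bt * norm y"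
      unfolding bt_y[symmetric] by (rule inner_eq_cos_vang[OF \<open>bt \<noteq> 0\<close> False])
    also have "\<dots> \<le> (cos \<beta> * norm bt) * norm y"
      using \<open>cos (vang bt y) \<le> cos \<beta>\<close> by (intro mult_right_mono) auto
    finally have "norm y * norm y \<le> (cos \<beta> * norm bt) * norm y" .
    then show ?thesis by (rule mult_right_le_imp_le) (use False in simp)
  qed
  then have "(norm y)\<^sup>2 \<le> (cos \<beta> * norm bt)\<^sup>2"
    by (intro power_mono) auto
  moreover have "(norm bt)\<^sup>2 * (sin \<beta>)\<^sup>2 = (norm bt)\<^sup>2 - (cos \<beta> * norm bt)\<^sup>2"
    by (simp add: sin_squared_eq power_mult_distrib right_diff_distrib)
  ultimately show ?thesis
    unfolding \<beta>_def[symmetric] using bt_sq by linarith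
qed

lemma gram_orthogonal_components_le:
  fixes b bt p q x y :: "'a::real_inner"
  assumes "x \<in> S" "y \<in> S" "\<And>w. w \<in> S \<Longrightarrow> orthogonal p w" "\<And>w. w \<in> S \<Longrightarrow> orthogonal q w"
    and "b = x + p" "bt = y + q" "b \<noteq> 0"
  shows "(p \<bullet> p) * (q \<bullet> q) - (p \<bullet> q)\<^sup>2 \<le> (p \<bullet> p) * ((norm bt)\<^sup>2 * (sin (vang bt b))\<^sup>2)"
proof -
  define s where "s = (bt \<bullet> b) / (b \<bullet> b)"
  have "p \<bullet> x = 0" "p \<bullet> y = 0" "q \<bullet> x = 0" "q \<bullet> y = 0"
    using assms(1-4) by (simp_all add: orthogonal_def)
  then have "orthogonal (y - s *\<^sub>R x) (q - s *\<^sub>R p)"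
    by (simp add: orthogonal_def inner_diff_left inner_diff_right inner_commute)
  moreover have "bt - s *\<^sub>R b = (y - s *\<^sub>R x) + (q - s *\<^sub>R p)"
    by (simp add: assms(5,6) algebra_simps)
  ultimately have "(norm (q - s *\<^sub>R p))\<^sup>2 \<le> (norm (bt - s *\<^sub>R b))\<^sup>2"
    by (simp add: norm_add_Pythagorean)
  also have "\<dots> = (norm bt)\<^sup>2 * (sin (vang bt b))\<^sup>2"
    unfolding s_def by (rule norm_diff_proj_sq_sin[OF assms(7)])
  finally show ?thesis
    using gram_le_norm_diff_sq[of p q s] by (smt (verit) inner_ge_zero mult_left_mono)
qed

lemma vang_le_replace_by_projection:
  fixes z p q :: "'a::real_inner"
  defines "c \<equiv> (p \<bullet> q) / (q \<bullet> q)"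
  assumes "orthogonal z p" "q \<noteq> 0" "z + t *\<^sub>R p \<noteq> 0" "0 \<le> g" "g < pi/2"
    and "(p \<bullet> p) * (q \<bullet> q) - (p \<bullet> q)\<^sup>2 \<le> (p \<bullet> p) * (q \<bullet> q) * (sin g)\<^sup>2"
  shows "z + (t * c) *\<^sub>R q \<noteq> 0" "vang (z + t *\<^sub>R p) (z + (t * c) *\<^sub>R q) \<le> g"
proof -
  have "q \<bullet> q > 0" using assms(3) by simp
  then have gram: "p \<bullet> p - (p \<bullet> q)\<^sup>2 / (q \<bullet> q) \<le> (p \<bullet> p) * (sin g)\<^sup>2"
    using assms(7) by (simp add: field_simps)
  have "z + t *\<^sub>R p - (z + (t * c) *\<^sub>R q) = t *\<^sub>R (p - c *\<^sub>R q)"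
    by (simp add: scaleR_diff_right)
  then have "(norm (z + t *\<^sub>R p - (z + (t * c) *\<^sub>R q)))\<^sup>2 = t\<^sup>2 * (norm (p - c *\<^sub>R q))\<^sup>2"
    by (simp add: power_mult_distrib)
  also have "\<dots> = t\<^sup>2 * (p \<bullet> p - (p \<bullet> q)\<^sup>2 / (q \<bullet> q))"
    unfolding c_def by (simp add: norm_diff_proj_sq[OF assms(3)])
  also have "\<dots> \<le> t\<^sup>2 * ((p \<bullet> p) * (sin g)\<^sup>2)"
    using gram by (intro mult_left_mono) auto
  also have "\<dots> \<le> (norm (z + t *\<^sub>R p))\<^sup>2 * (sin g)\<^sup>2"
  proof -
    have "(norm (z + t *\<^sub>R p))\<^sup>2 = (norm z)\<^sup>2 + t\<^sup>2 * (p \<bullet> p)"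
      using assms(2) by (simp add: norm_add_Pythagorean orthogonal_clauses power_mult_distrib
        dot_square_norm)
    then show ?thesis by (simp add: algebra_simps mult_right_mono)
  qed
  finally show "z + (t * c) *\<^sub>R q \<noteq> 0" "vang (z + t *\<^sub>R p) (z + (t * c) *\<^sub>R q) \<le> g"
    using vang_le_if_norm_diff_le[OF assms(4-6)] by auto
qed

lemma vsang_span_insert_le:
  fixes A :: "'a::euclidean_space set" and b bt v :: 'a
  assumes "b \<noteq> 0" "bt \<noteq> 0" "vang bt b < vsang bt (span A)"
    and "v \<in> span (insert b A)" "v \<noteq> 0"
  shows "vsang v (span (insert bt A)) \<le> pi/2 * vang bt b / vsang bt (span A)"
proof -
  define \<alpha> where "\<alpha> = vang bt b"
  define \<beta> where "\<beta> = vsang bt (span A)"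
  define \<gamma> where "\<gamma> = pi/2 * \<alpha> / \<beta>"
  have \<alpha>\<beta>: "0 \<le> \<alpha>" "\<alpha> < \<beta>" "\<beta> \<le> pi/2"
    using vang_bounds[of bt b] assms(3) vsang_le_pi_half[of "span A" bt]
    by (auto simp: \<alpha>_def \<beta>_def)
  then have \<gamma>: "0 \<le> \<gamma>" "\<gamma> < pi/2" by (simp_all add: \<gamma>_def field_simps)
  obtain x p where x: "x \<in> span A" and p: "\<And>w. w \<in> span A \<Longrightarrow> orthogonal p w" and "b = x + p"
    using orthogonal_subspace_decomp_exists[of A b] by metis
  obtain y q where y: "y \<in> span A" and q: "\<And>w. w \<in> span A \<Longrightarrow> orthogonal q w" and "bt = y + q"
    using orthogonal_subspace_decomp_exists[of A bt] by metis
  obtain t where "v - t *\<^sub>R b \<in> span A" using assms(4) span_breakdown_eq by blast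
  define z where "z = v - t *\<^sub>R p"
  have "z = (v - t *\<^sub>R b) + t *\<^sub>R x" by (simp add: z_def \<open>b = x + p\<close> algebra_simps)
  then have z: "z \<in> span A" using \<open>v - t *\<^sub>R b \<in> span A\<close> x by (simp add: span_add span_scale)
  have "sin \<beta> > 0" using \<alpha>\<beta> by (intro sin_gt_zero) auto
  then have "0 < (norm bt)\<^sup>2 * (sin \<beta>)\<^sup>2" using assms(2) by simp
  moreover have q_ge: "(norm bt)\<^sup>2 * (sin \<beta>)\<^sup>2 \<le> (norm q)\<^sup>2"
    unfolding \<beta>_def by (rule norm_orthogonal_component_ge[OF subspace_span y q \<open>bt = y + q\<close>])
  ultimately have "q \<noteq> 0" by auto
  have "sin \<alpha> \<le> sin \<beta> * sin \<gamma>"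
    using sin_mult_le_sin_mult_sin[of "\<alpha> / \<beta>" \<beta>] \<alpha>\<beta> by (simp add: \<gamma>_def field_simps)
  moreover have "0 \<le> sin \<alpha>" using vang_bounds[of bt b] by (simp add: \<alpha>_def sin_ge_zero)
  ultimately have sin_\<alpha>: "(sin \<alpha>)\<^sup>2 \<le> (sin \<beta>)\<^sup>2 * (sin \<gamma>)\<^sup>2"
    by (metis power_mono power_mult_distrib)
  have "(p \<bullet> p) * (q \<bullet> q) - (p \<bullet> q)\<^sup>2 \<le> (p \<bullet> p) * ((norm bt)\<^sup>2 * (sin \<alpha>)\<^sup>2)"
    unfolding \<alpha>_def
    by (rule gram_orthogonal_components_le[OF x y p q \<open>b = x + p\<close> \<open>bt = y + q\<close> assms(1)])
  also have "\<dots> \<le> (p \<bullet> p) * ((norm bt)\<^sup>2 * (sin \<beta>)\<^sup>2 * (sin \<gamma>)\<^sup>2)"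
    using sin_\<alpha> by (simp add: mult_left_mono mult.assoc)
  also have "\<dots> \<le> (p \<bullet> p) * ((q \<bullet> q) * (sin \<gamma>)\<^sup>2)"
    using q_ge by (intro mult_left_mono mult_right_mono) (simp_all add: dot_square_norm)
  also have "\<dots> = (p \<bullet> p) * (q \<bullet> q) * (sin \<gamma>)\<^sup>2" by (simp only: mult.assoc)
  finally have gram: "(p \<bullet> p) * (q \<bullet> q) - (p \<bullet> q)\<^sup>2 \<le> (p \<bullet> p) * (q \<bullet> q) * (sin \<gamma>)\<^sup>2" .
  define w where "w = z + (t * ((p \<bullet> q) / (q \<bullet> q))) *\<^sub>R q"
  have "orthogonal z p" using p[OF z] by (rule orthogonal_commute[THEN iffD1])
  moreover have "v = z + t *\<^sub>R p" by (simp add: z_def)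
  ultimately have "w \<noteq> 0" "vang v w \<le> \<gamma>"
    using vang_le_replace_by_projection[OF _ \<open>q \<noteq> 0\<close> _ \<gamma> gram] assms(5)
    unfolding w_def by auto
  moreover have "w \<in> span (insert bt A)"
  proof -
    have "span A \<subseteq> span (insert bt A)" by (intro span_mono) auto
    moreover have "q = bt - y" by (simp add: \<open>bt = y + q\<close>)
    ultimately show ?thesis
      using y z unfolding w_def by (metis span_add span_base span_diff span_scale insertI1 subsetD)
  qed
  ultimately show ?thesis
    using vsang_le_vang[of w "span (insert bt A)" v] by (simp add: \<alpha>_def \<beta>_def \<gamma>_def)
qed

theorem lemma2:
  fixes a :: "nat \<Rightarrow> real ^ 'n" and b bt :: "real ^ 'n" and k :: nat
  assumes "b \<noteq> 0" and "bt \<noteq> 0"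
  shows "ereal (ssang (span (a ` {1..<k} \<union> {b})) (span (a ` {1..<k} \<union> {bt})))
         \<le> (if vsang bt (span (a ` {1..<k})) = 0 then \<infinity>
             else ereal (pi / 2 * vang bt b / vsang bt (span (a ` {1..<k}))))"
proof (cases "vsang bt (span (a ` {1..<k})) = 0")
  case True then show ?thesis by simp
next
  case False
  define A where "A = a ` {1..<k}"
  define \<beta> where "\<beta> = vsang bt (span A)"
  define \<gamma> where "\<gamma> = pi/2 * vang bt b / \<beta>"
  have "0 < \<beta>" using False vsang_nonneg[of bt "span A"] by (simp add: \<beta>_def A_def)
  have "ssang (span (insert b A)) (span (insert bt A)) \<le> \<gamma>"
  proof (rule ssang_le)
    show "0 \<le> \<gamma>" using vang_bounds[of bt b] \<open>0 < \<beta>\<close> by (simp add: \<gamma>_def)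
    fix v assume v: "v \<in> span (insert b A)" "v \<noteq> 0"
    show "vsang v (span (insert bt A)) \<le> \<gamma>"
    proof (cases "vang bt b < \<beta>")
      case True
      then show ?thesis
        using vsang_span_insert_le[OF assms _ v] by (simp add: \<beta>_def \<gamma>_def)
    next
      case False
      then have "pi/2 \<le> \<gamma>" using \<open>0 < \<beta>\<close> by (simp add: \<gamma>_def field_simps)
      then show ?thesis using vsang_le_pi_half[of "span (insert bt A)" v] by simp
    qed
  qed
  then show ?thesis using False by (simp add: A_def \<beta>_def \<gamma>_def)
qed

end
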